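(* Let $n\ge 2$, $d\ge n+2$, and let $f$ be a Perazzo form of degree $d$ in $S$, with $A_f$ having $h$-vector $(h_0,\dots,h_d)$. Then: (1) $h_1=h_{d-1}=n+3$; (2) $h_2=h_{d-2}\ge n+4$; (3) $h_i\le d+2$ for all $i$, i.e. the Sperner number (maximum entry of the $h$-vector) is at most $d+2$.
   Context: $K$ is an algebraically closed field of characteristic zero. $S=K[x_0,\dots,x_n,u,v]$ and $R=K[y_0,\dots,y_n,U,V]$ acts on $S$ by differentiation ($y_i=\partial/\partial x_i$, $U=\partial/\partial u$, $V=\partial/\partial v$). A Perazzo form of degree $d$ is $f=x_0p_0+x_1p_1+\cdots+x_np_n+g$ where $p_0,\dots,p_n\in K[u,v]_{d-1}$ are linearly independent but algebraically dependent forms and $g\in K[u,v]_d$. $\operatorname{Ann}_R(f)=\{\theta\in R:\theta\circ f=0\}$ and $A_f=R/\operatorname{Ann}_R(f)$ is a graded artinian Gorenstein algebra of socle degree $d$; its $h$-vector is $h_i=\dim_K [A_f]_i$, which equals the dimension of the $K$-span of all order-$i$ partial derivatives of $f$, and satisfies $h_i=h_{d-i}$. *)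

theory Defs
  imports "HOL-Library.Poly_Mapping" "HOL-Computational_Algebra.Polynomial"
begin

text \<open>Multivariate polynomials over a field: finitely supported maps from
  monomials (finitely supported exponent vectors, variable i has index i) to coefficients.\<close>
type_synonym 'a mpoly = "(nat \<Rightarrow>\<^sub>0 nat) \<Rightarrow>\<^sub>0 'a"

definition mvar :: "nat \<Rightarrow> 'a::comm_ring_1 mpoly" where
  "mvar i = Poly_Mapping.single (Poly_Mapping.single i 1) 1"

definition msmult :: "'a::comm_ring_1 \<Rightarrow> 'a mpoly \<Rightarrow> 'a mpoly" where
  "msmult c p = Poly_Mapping.map (\<lambda>x. c * x) p"

definition mon_deg :: "(nat \<Rightarrow>\<^sub>0 nat) \<Rightarrow> nat" where
  "mon_deg m = (\<Sum>i\<in>Poly_Mapping.keys m. Poly_Mapping.lookup m i)"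

definition homogeneous :: "nat \<Rightarrow> 'a::comm_ring_1 mpoly \<Rightarrow> bool" where
  "homogeneous k p \<longleftrightarrow> (\<forall>m\<in>Poly_Mapping.keys p. mon_deg m = k)"

definition vars_in :: "nat set \<Rightarrow> 'a::comm_ring_1 mpoly \<Rightarrow> bool" where
  "vars_in V p \<longleftrightarrow> (\<forall>m\<in>Poly_Mapping.keys p. Poly_Mapping.keys m \<subseteq> V)"

definition pdiff :: "nat \<Rightarrow> 'a::comm_ring_1 mpoly \<Rightarrow> 'a mpoly" where
  "pdiff j p = (\<Sum>m\<in>Poly_Mapping.keys p. Poly_Mapping.single (m - Poly_Mapping.single j 1)
                                  (of_nat (Poly_Mapping.lookup m j) * Poly_Mapping.lookup p m))"

definition msubst :: "'a::comm_ring_1 mpoly \<Rightarrow> (nat \<Rightarrow> 'a mpoly) \<Rightarrow> 'a mpoly" where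
  "msubst F p = (\<Sum>m\<in>Poly_Mapping.keys F. msmult (Poly_Mapping.lookup F m) (\<Prod>j\<in>Poly_Mapping.keys m. p j ^ Poly_Mapping.lookup m j))"

definition lin_indep_fam :: "nat \<Rightarrow> (nat \<Rightarrow> 'a::comm_ring_1 mpoly) \<Rightarrow> bool" where
  "lin_indep_fam n p \<longleftrightarrow>
     (\<forall>c. (\<Sum>i\<le>n. msmult (c i) (p i)) = 0 \<longrightarrow> (\<forall>i\<le>n. c i = 0))"

definition alg_dep_fam :: "nat \<Rightarrow> (nat \<Rightarrow> 'a::comm_ring_1 mpoly) \<Rightarrow> bool" where
  "alg_dep_fam n p \<longleftrightarrow> (\<exists>F. F \<noteq> 0 \<and> vars_in {..n} F \<and> msubst F p = 0)"

text \<open>Perazzo form of degree d in S = K[x_0..x_n,u,v], with x_i = variable i,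
  u = variable n+1, v = variable n+2.\<close>
definition perazzo_form :: "nat \<Rightarrow> nat \<Rightarrow> 'a::comm_ring_1 mpoly \<Rightarrow> bool" where
  "perazzo_form n d f \<longleftrightarrow>
     (\<exists>p g. (\<forall>i\<le>n. homogeneous (d - 1) (p i) \<and> vars_in {n+1, n+2} (p i))
          \<and> lin_indep_fam n p \<and> alg_dep_fam n p
          \<and> homogeneous d g \<and> vars_in {n+1, n+2} g
          \<and> f = (\<Sum>i\<le>n. mvar i * p i) + g)"

primrec derivs :: "nat \<Rightarrow> nat \<Rightarrow> 'a::comm_ring_1 mpoly \<Rightarrow> 'a mpoly set" where
  "derivs N 0 f = {f}"
| "derivs N (Suc i) f = {pdiff j g | j g. j < N \<and> g \<in> derivs N i f}"

text \<open>h-vector of A_f: h_i = dim of the K-span of the order-i partials of f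
  (here f lives in N = n+3 variables).\<close>
definition hvec :: "nat \<Rightarrow> 'a::field mpoly \<Rightarrow> nat \<Rightarrow> nat" where
  "hvec N f i = vector_space.dim msmult (derivs N i f)"

end

theory Submission
  imports Defs
begin

text \<open>
  Write \<open>u\<close>, \<open>v\<close> for the last two variables, so that \<open>\<partial>f/\<partial>x\<^sub>i = p\<^sub>i\<close> and all \<open>p\<^sub>i\<close> are binary forms
  in \<open>u\<close>, \<open>v\<close>. A nonzero operator \<open>a\<partial>\<^sub>u + b\<partial>\<^sub>v\<close> kills at most a line of binary forms of a given
  degree, so it cannot kill two independent \<open>p\<^sub>i\<close>; this makes the \<open>n + 3\<close> first partials of \<open>f\<close>
  independent. Over an algebraically closed field a nonzero \<open>a\<partial>\<^sub>u\<^sub>u + b\<partial>\<^sub>u\<^sub>v + c\<partial>\<^sub>v\<^sub>v\<close> is a product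
  of two first-order operators and therefore kills no three independent \<open>p\<^sub>i\<close>. Since the kernels of
  \<open>\<partial>\<^sub>u + t\<partial>\<^sub>v\<close> for \<open>d\<close> distinct \<open>t\<close> are independent and \<open>d > n + 1\<close>, some \<open>\<partial>\<^sub>u + t\<partial>\<^sub>v\<close> is
  injective on the span of the \<open>p\<^sub>i\<close>, and then \<open>\<partial>\<^sub>u\<^sub>u f, \<partial>\<^sub>u\<^sub>v f, \<partial>\<^sub>v\<^sub>v f\<close> and the \<open>(\<partial>\<^sub>u + t\<partial>\<^sub>v) p\<^sub>i\<close>
  are \<open>n + 4\<close> independent second derivatives. A derivative of order \<open>i\<close> is either a binary form of
  degree \<open>d - i\<close> or one of the \<open>i + 1\<close> derivatives \<open>\<partial>\<^sub>u\<^sup>a \<partial>\<^sub>v\<^sup>i\<^sup>-\<^sup>a f\<close>, whence \<open>h\<^sub>i \<le> (d - i + 1) + (i + 1)\<close>.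
  Finally \<open>h\<^sub>i = h\<^sub>d\<^sub>-\<^sub>i\<close> by apolarity: the functionals \<open>r \<mapsto> (\<partial>\<^sup>w r)(0)\<close>, for \<open>\<partial>\<^sup>w f\<close> running through
  a basis of the order-\<open>i\<close> derivatives, separate the span of the order-\<open>(d - i)\<close> derivatives.
\<close>

section \<open>Linear algebra\<close>

lemma (in vector_space) span_insert_kernel:
  fixes \<psi> :: "'b \<Rightarrow> 'a"
  assumes add: "\<And>x y. \<psi> (x + y) = \<psi> x + \<psi> y" and scale: "\<And>c x. \<psi> (c *s x) = c * \<psi> x"
    and "\<psi> x\<^sub>0 \<noteq> 0" "x\<^sub>0 \<in> span S"
  shows "span S \<subseteq> span (insert x\<^sub>0 {x \<in> span S. \<psi> x = 0})"
proof
  fix y assume y: "y \<in> span S"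
  let ?c = "\<psi> y / \<psi> x\<^sub>0"
  have "\<psi> (y - ?c *s x\<^sub>0) + \<psi> (?c *s x\<^sub>0) = \<psi> y"
    using add[of "y - ?c *s x\<^sub>0" "?c *s x\<^sub>0"] by simp
  then have "\<psi> (y - ?c *s x\<^sub>0) = 0" using scale[of ?c x\<^sub>0] assms(3) by simp
  then have "y - ?c *s x\<^sub>0 \<in> {x \<in> span S. \<psi> x = 0}"
    using y assms(4) by (simp add: span_diff span_scale)
  then show "y \<in> span (insert x\<^sub>0 {x \<in> span S. \<psi> x = 0})"
    unfolding span_breakdown_eq by (blast intro: span_base)
qed

lemma (in vector_space) dim_le_card_if_functionals_separate:
  fixes \<phi> :: "'c \<Rightarrow> 'b \<Rightarrow> 'a"
  assumes "finite B" "finite S"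
    and add: "\<And>b x y. \<phi> b (x + y) = \<phi> b x + \<phi> b y"
    and scale: "\<And>b c x. \<phi> b (c *s x) = c * \<phi> b x"
    and separate: "\<And>x. x \<in> span S \<Longrightarrow> \<forall>b\<in>B. \<phi> b x = 0 \<Longrightarrow> x = 0"
  shows "dim S \<le> card B"
  using assms(1,2) separate
proof (induction B arbitrary: S rule: finite_induct)
  case empty
  then have "S \<subseteq> span {}" using span_superset by auto
  then show ?case using dim_le_card[of S "{}"] by simp
next
  case (insert b B)
  have \<phi>0: "\<phi> b' 0 = 0" for b' using scale[of b' 0 0] by simp
  define K where "K = {x \<in> span S. \<phi> b x = 0}"
  have "subspace K"
    unfolding K_def subspace_def using \<phi>0 add scale by (auto intro: span_add span_scale span_zero)
  obtain C where C: "C \<subseteq> K" "independent C" "K \<subseteq> span C" "card C = dim K"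
    using basis_exists by blast
  have "finite C"
    using independent_span_bound[OF \<open>finite S\<close> C(2)] C(1) by (auto simp: K_def)
  have "span C \<subseteq> K" using span_minimal[OF C(1) \<open>subspace K\<close>] .
  have "dim C \<le> card B"
  proof (rule insert.IH[OF \<open>finite C\<close>])
    fix x assume "x \<in> span C" "\<forall>b\<in>B. \<phi> b x = 0"
    then show "x = 0" using insert.prems \<open>span C \<subseteq> K\<close> by (auto simp: K_def)
  qed
  then have "card C \<le> card B" using dim_eq_card_independent[OF C(2)] by simp
  moreover have "dim S \<le> card C + 1"
  proof (cases "\<exists>x\<^sub>0\<in>span S. \<phi> b x\<^sub>0 \<noteq> 0")
    case True
    then obtain x\<^sub>0 where x\<^sub>0: "x\<^sub>0 \<in> span S" "\<phi> b x\<^sub>0 \<noteq> 0" by blast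
    have "span S \<subseteq> span (insert x\<^sub>0 K)"
      using span_insert_kernel[OF add scale x\<^sub>0(2,1)] by (simp add: K_def)
    also have "\<dots> \<subseteq> span (insert x\<^sub>0 C)"
      using C(3) span_mono[of C "insert x\<^sub>0 C"] by (intro span_minimal) (auto intro: span_base)
    finally have "dim S \<le> card (insert x\<^sub>0 C)"
      using span_superset \<open>finite C\<close> by (intro dim_le_card) auto
    moreover have "card (insert x\<^sub>0 C) \<le> card C + 1"
      using \<open>finite C\<close> by (simp add: card_insert_if)
    ultimately show ?thesis by linarith
  next
    case False
    then have "S \<subseteq> span C" using span_superset C(3) unfolding K_def by blast
    then show ?thesis using dim_le_card[OF _ \<open>finite C\<close>, of S] by simp
  qed
  ultimately show ?case using insert.hyps by simp
qed

lemma (in vector_space) independent_family: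
  assumes "finite I" and rel: "\<And>c. (\<Sum>i\<in>I. c i *s g i) = 0 \<Longrightarrow> \<forall>i\<in>I. c i = 0"
  shows "independent (g ` I)" "card (g ` I) = card I"
proof -
  have inj: "inj_on g I"
  proof (rule inj_onI, rule ccontr)
    fix i j assume ij: "i \<in> I" "j \<in> I" "g i = g j" "i \<noteq> j"
    define c :: "_ \<Rightarrow> 'a" where "c k = (if k = i then 1 else if k = j then -1 else 0)" for k
    have "(\<Sum>k\<in>I. c k *s g k) = (\<Sum>k\<in>{i, j}. c k *s g k)"
      using assms(1) ij by (intro sum.mono_neutral_right) (auto simp: c_def)
    also have "\<dots> = 0" using ij by (simp add: c_def)
    finally have "c i = 0" using rel ij(1) by blast
    then show False by (simp add: c_def)
  qed
  then show "card (g ` I) = card I" by (rule card_image)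
  show "independent (g ` I)"
  proof (rule independent_if_scalars_zero)
    fix c x assume "(\<Sum>x\<in>g ` I. c x *s x) = 0" "x \<in> g ` I"
    then show "c x = 0" using rel[of "c \<circ> g"] by (auto simp: sum.reindex[OF inj])
  qed (use assms(1) in simp)
qed

lemma (in vector_space) card_le_dim_if_independent_in_span:
  assumes "finite V" "independent B" "B \<subseteq> span V"
  shows "card B \<le> dim V"
proof -
  obtain C where C: "C \<subseteq> V" "V \<subseteq> span C" "card C = dim V"
    by (rule basis_exists)
  then have "B \<subseteq> span C" using assms(3) span_mono[OF C(2)] by (simp add: span_span)
  then show ?thesis
    using independent_span_bound[OF finite_subset[OF C(1) assms(1)] assms(2)] C(3) by simp
qed

section \<open>Polynomials and partial derivatives\<close>

abbreviation lookup :: "('b \<Rightarrow>\<^sub>0 'c::zero) \<Rightarrow> 'b \<Rightarrow> 'c" where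
  "lookup \<equiv> Poly_Mapping.lookup"

abbreviation single :: "'b \<Rightarrow> 'c \<Rightarrow> ('b \<Rightarrow>\<^sub>0 'c::zero)" where
  "single \<equiv> Poly_Mapping.single"

lemma lookup_msmult [simp]: "lookup (msmult c p) m = c * lookup p m"
  unfolding msmult_def by (simp add: Poly_Mapping.map.rep_eq when_def)

lemma msmult_0_left [simp]: "msmult 0 p = 0"
  by (rule poly_mapping_eqI) simp

interpretation MV: vector_space "msmult :: 'a::field \<Rightarrow> 'a mpoly \<Rightarrow> 'a mpoly"
  by unfold_locales (auto intro!: poly_mapping_eqI simp: lookup_add algebra_simps)

lemma lookup_pdiff: "lookup (pdiff j p) m = of_nat (lookup m j + 1) * lookup p (m + single j 1)"
proof -
  let ?e = "single j (1::nat)"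
  have shift: "m = k - ?e \<longleftrightarrow> k = m + ?e" if "lookup k j \<noteq> 0" for k
    using that by (auto intro!: poly_mapping_eqI simp: lookup_add lookup_minus lookup_single when_def)
  have "lookup (pdiff j p) m
      = (\<Sum>k\<in>Poly_Mapping.keys p. if m = k - ?e then of_nat (lookup k j) * lookup p k else 0)"
    unfolding pdiff_def lookup_sum by (auto simp: lookup_single when_def intro!: sum.cong)
  also have "\<dots> = (\<Sum>k\<in>Poly_Mapping.keys p. if k = m + ?e then of_nat (lookup k j) * lookup p k else 0)"
  proof (rule sum.cong)
    fix k
    show "(if m = k - ?e then of_nat (lookup k j) * lookup p k else 0)
        = (if k = m + ?e then of_nat (lookup k j) * lookup p k else 0)"
      using shift[of k] by (cases "lookup k j = 0") (auto simp: lookup_add)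
  qed simp
  also have "\<dots> = of_nat (lookup m j + 1) * lookup p (m + ?e)"
    by (auto simp: lookup_add in_keys_iff)
  finally show ?thesis .
qed

lemma pdiff_add: "pdiff j (p + q) = pdiff j p + pdiff j q"
  by (rule poly_mapping_eqI) (simp add: lookup_pdiff lookup_add algebra_simps)

lemma pdiff_msmult: "pdiff j (msmult c p) = msmult c (pdiff j p)"
  by (rule poly_mapping_eqI) (simp add: lookup_pdiff algebra_simps)

interpretation pdiff: Vector_Spaces.linear msmult msmult "pdiff j :: 'a::field mpoly \<Rightarrow> 'a mpoly" for j
  by unfold_locales (simp_all add: pdiff_add pdiff_msmult)

lemma pdiff_commute: "pdiff j (pdiff k p) = pdiff k (pdiff j p)"
  by (rule poly_mapping_eqI, cases "j = k") (simp_all add: lookup_pdiff lookup_add lookup_single ac_simps)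

lemma pdiff_funpow_pdiff: "pdiff j ((pdiff k ^^ m) q) = (pdiff k ^^ m) (pdiff j q)"
  by (induction m) (simp_all, metis pdiff_commute)

lemma mon_deg_eq_sum: "finite S \<Longrightarrow> Poly_Mapping.keys m \<subseteq> S \<Longrightarrow> mon_deg m = (\<Sum>i\<in>S. lookup m i)"
  unfolding mon_deg_def by (rule sum.mono_neutral_left) (auto simp: in_keys_iff)

lemma mon_deg_add [simp]: "mon_deg (a + b) = mon_deg a + mon_deg b"
proof -
  let ?S = "Poly_Mapping.keys a \<union> Poly_Mapping.keys b"
  have "mon_deg (a + b) = (\<Sum>i\<in>?S. lookup (a + b) i)"
    by (rule mon_deg_eq_sum) (auto simp: in_keys_iff lookup_add)
  then show ?thesis
    using mon_deg_eq_sum[of ?S a] mon_deg_eq_sum[of ?S b] by (simp add: lookup_add sum.distrib)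
qed

lemma mon_deg_single [simp]: "mon_deg (single j k) = k"
  by (simp add: mon_deg_def)

lemma mon_deg_eq_0_iff: "mon_deg m = 0 \<longleftrightarrow> m = 0"
  unfolding mon_deg_def by (auto simp: in_keys_iff intro!: poly_mapping_eqI)

lemma homogeneous_iff: "homogeneous k p \<longleftrightarrow> (\<forall>m. lookup p m \<noteq> 0 \<longrightarrow> mon_deg m = k)"
  unfolding homogeneous_def by (auto simp: in_keys_iff)

lemma vars_in_iff: "vars_in V p \<longleftrightarrow> (\<forall>m. lookup p m \<noteq> 0 \<longrightarrow> Poly_Mapping.keys m \<subseteq> V)"
  unfolding vars_in_def by (auto simp: in_keys_iff)

lemma vars_in_mono: "vars_in V p \<Longrightarrow> V \<subseteq> W \<Longrightarrow> vars_in W p"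
  unfolding vars_in_def by blast

lemma keys_msmult: "Poly_Mapping.keys (msmult c p) \<subseteq> Poly_Mapping.keys p"
  by (auto simp: in_keys_iff)

lemma subspace_homogeneous: "MV.subspace {p :: 'a::field mpoly. homogeneous k p}"
  unfolding MV.subspace_def homogeneous_def by (auto dest: subsetD[OF keys_add] subsetD[OF keys_msmult])

lemma subspace_vars_in: "MV.subspace {p :: 'a::field mpoly. vars_in V p}"
  unfolding MV.subspace_def vars_in_def by (auto dest: subsetD[OF keys_add] subsetD[OF keys_msmult])

lemma homogeneous_add: "homogeneous k p \<Longrightarrow> homogeneous k q \<Longrightarrow> homogeneous k (p + q :: 'a::field mpoly)"
  using MV.subspace_add[OF subspace_homogeneous] by simp

lemma homogeneous_sum: "(\<And>a. a \<in> A \<Longrightarrow> homogeneous k (h a)) \<Longrightarrow> homogeneous k (sum h A :: 'a::field mpoly)"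
  using MV.subspace_sum[OF subspace_homogeneous, of A h] by simp

lemma vars_in_add: "vars_in V p \<Longrightarrow> vars_in V q \<Longrightarrow> vars_in V (p + q :: 'a::field mpoly)"
  using MV.subspace_add[OF subspace_vars_in] by simp

lemma vars_in_sum: "(\<And>a. a \<in> A \<Longrightarrow> vars_in V (h a)) \<Longrightarrow> vars_in V (sum h A :: 'a::field mpoly)"
  using MV.subspace_sum[OF subspace_vars_in, of A h] by simp

lemma keys_add_single: "Poly_Mapping.keys (m + single j (Suc 0)) = insert j (Poly_Mapping.keys m)"
  by (auto simp: in_keys_iff lookup_add lookup_single when_def split: if_splits)

lemma homogeneous_pdiff: "homogeneous k p \<Longrightarrow> homogeneous (k - 1) (pdiff j p)"
  unfolding homogeneous_iff by (auto simp: lookup_pdiff dest!: mult_not_zero)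

lemma pdiff_homogeneous_0: "homogeneous 0 p \<Longrightarrow> pdiff j p = 0"
proof (rule poly_mapping_eqI)
  fix m assume "homogeneous 0 p"
  then have "lookup p (m + single j 1) = 0"
    unfolding homogeneous_iff by (metis add_is_0 mon_deg_add mon_deg_single zero_neq_one)
  then show "lookup (pdiff j p) m = lookup 0 m" by (simp add: lookup_pdiff)
qed

lemma vars_in_pdiff: "vars_in V p \<Longrightarrow> vars_in V (pdiff j p)"
  unfolding vars_in_iff
proof (intro allI impI)
  fix m assume p: "\<forall>m. lookup p m \<noteq> 0 \<longrightarrow> Poly_Mapping.keys m \<subseteq> V"
    and "lookup (pdiff j p) m \<noteq> 0"
  then have "Poly_Mapping.keys (m + single j 1) \<subseteq> V"
    by (auto simp: lookup_pdiff dest!: mult_not_zero)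
  then show "Poly_Mapping.keys m \<subseteq> V" by (simp add: keys_add_single)
qed

lemma pdiff_eq_0_if_not_vars_in: "vars_in V p \<Longrightarrow> j \<notin> V \<Longrightarrow> pdiff j p = 0"
proof (rule poly_mapping_eqI)
  fix m assume "vars_in V p" "j \<notin> V"
  then have "lookup p (m + single j 1) = 0"
    unfolding vars_in_iff by (auto simp: keys_add_single)
  then show "lookup (pdiff j p) m = lookup 0 m" by (simp add: lookup_pdiff)
qed

lemma lookup_mvar_mult:
  "lookup (mvar i * p) m = (if lookup m i \<ge> 1 then lookup p (m - single i 1) else 0)"
proof -
  have shift: "m = single i 1 + q \<longleftrightarrow> lookup m i \<ge> 1 \<and> q = m - single i 1" for q
    by (auto intro!: poly_mapping_eqI simp: lookup_add lookup_minus lookup_single when_def)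
  have "lookup (mvar i * p) m = (\<Sum>q. lookup p q when m = single i 1 + q)"
    unfolding lookup_mult mvar_def by (simp add: lookup_single when_mult)
  also have "\<dots> = (if lookup m i \<ge> 1 then lookup p (m - single i 1) else 0)"
    unfolding shift by (simp add: when_def)
  finally show ?thesis .
qed

lemma pdiff_mvar_mult: "pdiff j (mvar i * p) = (if i = j then p else 0) + mvar i * pdiff j p"
proof (rule poly_mapping_eqI)
  fix m
  let ?ei = "single i (1::nat)" and ?ej = "single j (1::nat)"
  show "lookup (pdiff j (mvar i * p)) m = lookup ((if i = j then p else 0) + mvar i * pdiff j p) m"
  proof (cases "i = j")
    case True
    have "m + ?ej - ?ej = m" by (auto intro!: poly_mapping_eqI simp: lookup_add lookup_minus)
    moreover have "m - ?ej + ?ej = m" "lookup (m - ?ej) j + 1 = lookup m j" if "1 \<le> lookup m j"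
      using that by (auto intro!: poly_mapping_eqI simp: lookup_add lookup_minus lookup_single when_def)
    ultimately show ?thesis using True
      by (auto simp: lookup_pdiff lookup_mvar_mult lookup_add distrib_right Suc_le_eq)
  next
    case False
    have "m + ?ej - ?ei = m - ?ei + ?ej" if "1 \<le> lookup m i"
      using that False by (auto intro!: poly_mapping_eqI simp: lookup_add lookup_minus lookup_single when_def)
    then show ?thesis using False
      by (auto simp: lookup_pdiff lookup_mvar_mult lookup_add lookup_minus lookup_single)
  qed
qed

lemma homogeneous_mvar_mult: "homogeneous k p \<Longrightarrow> homogeneous (Suc k) (mvar i * p)"
proof -
  have "mon_deg m = mon_deg (m - single i 1) + 1" if "1 \<le> lookup m i" for m
  proof -
    have "m = (m - single i 1) + single i 1"
      using that by (auto intro!: poly_mapping_eqI simp: lookup_add lookup_minus lookup_single when_def)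
    then show ?thesis by (metis mon_deg_add mon_deg_single)
  qed
  then show "homogeneous k p \<Longrightarrow> homogeneous (Suc k) (mvar i * p)"
    unfolding homogeneous_iff by (auto simp: lookup_mvar_mult split: if_splits)
qed

lemma vars_in_mvar_mult: "vars_in V p \<Longrightarrow> i \<in> V \<Longrightarrow> vars_in V (mvar i * p)"
  unfolding vars_in_iff
proof (intro allI impI)
  fix m assume p: "\<forall>m. lookup p m \<noteq> 0 \<longrightarrow> Poly_Mapping.keys m \<subseteq> V" and "i \<in> V"
    and "lookup (mvar i * p) m \<noteq> 0"
  then have "1 \<le> lookup m i" "Poly_Mapping.keys (m - single i 1) \<subseteq> V"
    by (auto simp: lookup_mvar_mult split: if_splits)
  moreover have "Poly_Mapping.keys m \<subseteq> insert i (Poly_Mapping.keys (m - single i 1))"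
    by (auto simp: in_keys_iff lookup_minus lookup_single when_def split: if_splits)
  ultimately show "Poly_Mapping.keys m \<subseteq> V" using \<open>i \<in> V\<close> by blast
qed

lemma homogeneous_eq_0_if_pdiffs_eq_0:
  fixes p :: "'a::field_char_0 mpoly"
  assumes "vars_in V p" "homogeneous (Suc k) p" "\<forall>j\<in>V. pdiff j p = 0"
  shows "p = 0"
proof (rule poly_mapping_eqI, rule ccontr)
  fix m assume "lookup p m \<noteq> lookup 0 m"
  then have nz: "lookup p m \<noteq> 0" by simp
  then have "m \<noteq> 0" using assms(2) unfolding homogeneous_iff by (metis mon_deg_eq_0_iff nat.distinct(1))
  then obtain j where j: "j \<in> Poly_Mapping.keys m"
    by (metis all_not_in_conv keys_eq_empty)
  then have "j \<in> V" using assms(1) nz by (auto simp: vars_in_iff)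
  have "m - single j 1 + single j 1 = m" using j
    by (auto intro!: poly_mapping_eqI simp: lookup_add lookup_minus lookup_single when_def in_keys_iff)
  then have "lookup (pdiff j p) (m - single j 1) \<noteq> 0"
    using nz by (simp add: lookup_pdiff flip: of_nat_Suc)
  then show False using assms(3) \<open>j \<in> V\<close> by auto
qed

lemma homogeneous_0_eq_0: "homogeneous 0 p \<Longrightarrow> lookup p 0 = 0 \<Longrightarrow> p = 0"
  by (rule poly_mapping_eqI) (metis homogeneous_iff lookup_zero mon_deg_eq_0_iff)

section \<open>Iterated derivatives and the symmetry of the h-vector\<close>

interpretation pdiffs: Vector_Spaces.linear msmult msmult "fold pdiff w :: 'a::field mpoly \<Rightarrow> 'a mpoly" for w
proof unfold_locales
  show "fold pdiff w (p + q) = fold pdiff w p + fold pdiff w q" for p q :: "'a mpoly"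
    by (induction w arbitrary: p q) (simp_all add: pdiff_add)
  show "fold pdiff w (msmult c p) = msmult c (fold pdiff w p)" for c and p :: "'a mpoly"
    by (induction w arbitrary: p) (simp_all add: pdiff_msmult)
qed

lemma fold_pdiff_pdiff: "fold pdiff w (pdiff j p) = pdiff j (fold pdiff w p)"
  by (induction w arbitrary: p) (simp_all, metis pdiff_commute)

lemma fold_pdiff_commute: "fold pdiff w (fold pdiff v p) = fold pdiff v (fold pdiff w p)"
  by (induction v arbitrary: p) (simp_all add: fold_pdiff_pdiff)

lemma homogeneous_fold_pdiff: "homogeneous k p \<Longrightarrow> homogeneous (k - length w) (fold pdiff w p)"
proof (induction w arbitrary: p k)
  case (Cons j w)
  then show ?case using Cons.IH[OF homogeneous_pdiff[OF Cons.prems]] by simp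
qed simp

lemma fold_pdiff_eq_0: "homogeneous k p \<Longrightarrow> k < length w \<Longrightarrow> fold pdiff w p = (0::'a::field mpoly)"
proof (induction w arbitrary: p k)
  case (Cons j w)
  show ?case
  proof (cases k)
    case 0
    then show ?thesis using Cons.prems pdiff_homogeneous_0[of p j] pdiffs.zero by simp
  next
    case (Suc k')
    then show ?thesis using Cons homogeneous_pdiff[OF Cons.prems(1), of j] by simp
  qed
qed simp

lemma vars_in_fold_pdiff: "vars_in V p \<Longrightarrow> vars_in V (fold pdiff w p)"
  by (induction w arbitrary: p) (simp_all add: vars_in_pdiff)

lemma lists_length_Suc_eq:
  "{w. set w \<subseteq> A \<and> length w = Suc i} = {w @ [j] | w j. set w \<subseteq> A \<and> length w = i \<and> j \<in> A}"
  by (auto simp: length_Suc_conv_rev)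

lemma derivs_eq: "derivs N i f = (\<lambda>w. fold pdiff w f) ` {w. set w \<subseteq> {..<N} \<and> length w = i}"
proof (induction i)
  case (Suc i)
  have "derivs N (Suc i) f = {pdiff j (fold pdiff w f) | w j. set w \<subseteq> {..<N} \<and> length w = i \<and> j < N}"
    using Suc by auto
  also have "\<dots> = (\<lambda>w. fold pdiff w f) ` {w @ [j] | w j. set w \<subseteq> {..<N} \<and> length w = i \<and> j \<in> {..<N}}"
    by force
  finally show ?case unfolding lists_length_Suc_eq .
qed auto

lemma derivs_SucE:
  assumes "x \<in> derivs N (Suc i) f"
  obtains j y where "x = pdiff j y" "j < N" "y \<in> derivs N i f"
  using assms by auto

lemma finite_derivs: "finite (derivs N i f)"
  using finite_lists_length_eq[of "{..<N}" i] by (simp add: derivs_eq)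

lemma pdiff_pdiff_in_derivs_2: "j < N \<Longrightarrow> k < N \<Longrightarrow> pdiff j (pdiff k f) \<in> derivs N 2 f"
  by (auto simp: numeral_2_eq_2)

lemma homogeneous_eq_0_if_derivs_vanish_at_0:
  fixes r :: "'a::field_char_0 mpoly"
  assumes "homogeneous k r" "vars_in {..<N} r"
    and "\<And>w. set w \<subseteq> {..<N} \<Longrightarrow> length w = k \<Longrightarrow> lookup (fold pdiff w r) 0 = 0"
  shows "r = 0"
  using assms
proof (induction k arbitrary: r)
  case 0
  then show ?case using homogeneous_0_eq_0[of r] by simp
next
  case (Suc k)
  have "pdiff j r = 0" if "j < N" for j
  proof (rule Suc.IH)
    show "homogeneous k (pdiff j r)" using homogeneous_pdiff[OF Suc.prems(1)] by simp
    show "vars_in {..<N} (pdiff j r)" using vars_in_pdiff[OF Suc.prems(2)] .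
    show "lookup (fold pdiff w (pdiff j r)) 0 = 0" if "set w \<subseteq> {..<N}" "length w = k" for w
      using Suc.prems(3)[of "j # w"] that \<open>j < N\<close> by simp
  qed
  then show ?case using homogeneous_eq_0_if_pdiffs_eq_0[of "{..<N}" r k] Suc.prems by auto
qed

lemma homogeneous_span_derivs:
  assumes "homogeneous d f" "i \<le> d" "r \<in> MV.span (derivs N i f)"
  shows "homogeneous (d - i) (r :: 'a::field mpoly)"
proof -
  have "derivs N i f \<subseteq> {p. homogeneous (d - i) p}"
    using homogeneous_fold_pdiff[OF assms(1)] by (auto simp: derivs_eq)
  then show ?thesis
    using MV.span_minimal[OF _ subspace_homogeneous] assms(3) by blast
qed

lemma vars_in_span_derivs:
  assumes "vars_in V f" "r \<in> MV.span (derivs N i f)"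
  shows "vars_in V (r :: 'a::field mpoly)"
proof -
  have "derivs N i f \<subseteq> {p. vars_in V p}"
    using vars_in_fold_pdiff[OF assms(1)] by (auto simp: derivs_eq)
  then show ?thesis
    using MV.span_minimal[OF _ subspace_vars_in] assms(2) by blast
qed

lemma fold_pdiff_relation_span:
  assumes rel: "fold pdiff w f = (\<Sum>k\<in>K. msmult (a k) (fold pdiff (ws k) f))"
    and r: "r \<in> MV.span (range (\<lambda>v. fold pdiff v f))"
  shows "fold pdiff w r = (\<Sum>k\<in>K. msmult (a k) (fold pdiff (ws k) (r :: 'a::field mpoly)))"
  using r
proof (induction rule: MV.span_induct_alt)
  case (step c x y)
  then obtain v where v: "x = fold pdiff v f" by blast
  have "fold pdiff w x = fold pdiff v (fold pdiff w f)"
    unfolding v by (rule fold_pdiff_commute)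
  also have "\<dots> = (\<Sum>k\<in>K. msmult (a k) (fold pdiff (ws k) x))"
    unfolding rel v by (simp add: pdiffs.sum pdiffs.scale fold_pdiff_commute)
  finally show ?case using step.IH
    by (simp add: pdiffs.add pdiffs.scale sum.distrib MV.scale_sum_right MV.scale_right_distrib mult.commute)
qed (simp add: pdiffs.zero)

lemma apolar_to_basis_eq_0:
  fixes f r :: "'a::field_char_0 mpoly"
  assumes hom: "homogeneous d f" and vars: "vars_in {..<N} f" and "i \<le> d"
    and B: "finite B" "derivs N i f \<subseteq> MV.span B" "\<And>b. b \<in> B \<Longrightarrow> b = fold pdiff (word b) f"
    and r: "r \<in> MV.span (derivs N (d - i) f)"
    and apolar: "\<forall>b\<in>B. lookup (fold pdiff (word b) r) 0 = 0"
  shows "r = 0"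
proof (rule homogeneous_eq_0_if_derivs_vanish_at_0)
  show "homogeneous i r" using homogeneous_span_derivs[OF hom _ r] \<open>i \<le> d\<close> by simp
  show "vars_in {..<N} r" using vars_in_span_derivs[OF vars r] .
  fix w assume "set w \<subseteq> {..<N}" "length w = i"
  then have "fold pdiff w f \<in> MV.span B" using B(2) by (auto simp: derivs_eq)
  then obtain a where "fold pdiff w f = (\<Sum>b\<in>B. msmult (a b) b)"
    using MV.span_finite[OF B(1)] by auto
  then have rel: "fold pdiff w f = (\<Sum>b\<in>B. msmult (a b) (fold pdiff (word b) f))"
    using B(3) by (auto intro: sum.cong)
  have "r \<in> MV.span (range (\<lambda>v. fold pdiff v f))"
    using r MV.span_mono[of "derivs N (d - i) f" "range (\<lambda>v. fold pdiff v f)"]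
    by (auto simp: derivs_eq)
  then have "fold pdiff w r = (\<Sum>b\<in>B. msmult (a b) (fold pdiff (word b) r))"
    by (rule fold_pdiff_relation_span[OF rel])
  then show "lookup (fold pdiff w r) 0 = 0" using apolar by (simp add: lookup_sum)
qed

lemma dim_derivs_dual_le:
  fixes f :: "'a::field_char_0 mpoly"
  assumes "homogeneous d f" "vars_in {..<N} f" "i \<le> d"
  shows "MV.dim (derivs N (d - i) f) \<le> MV.dim (derivs N i f)"
proof -
  obtain B where B: "B \<subseteq> derivs N i f" "MV.independent B" "derivs N i f \<subseteq> MV.span B"
      "card B = MV.dim (derivs N i f)"
    by (rule MV.basis_exists)
  have "finite B" using finite_subset[OF B(1) finite_derivs] .
  have "\<forall>b\<in>B. \<exists>w. b = fold pdiff w f" using B(1) by (auto simp: derivs_eq)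
  then obtain word where word: "\<And>b. b \<in> B \<Longrightarrow> b = fold pdiff (word b) f" by metis
  have "MV.dim (derivs N (d - i) f) \<le> card B"
  proof (rule MV.dim_le_card_if_functionals_separate[OF \<open>finite B\<close> finite_derivs])
    show "lookup (fold pdiff (word b) (x + y :: 'a mpoly)) 0
        = lookup (fold pdiff (word b) x) 0 + lookup (fold pdiff (word b) y) 0" for b x y
      by (simp add: pdiffs.add lookup_add)
    show "lookup (fold pdiff (word b) (msmult c x :: 'a mpoly)) 0 = c * lookup (fold pdiff (word b) x) 0"
      for b c x by (simp add: pdiffs.scale)
    show "r = 0" if "r \<in> MV.span (derivs N (d - i) f)" "\<forall>b\<in>B. lookup (fold pdiff (word b) r) 0 = 0" for r
      using apolar_to_basis_eq_0[OF assms \<open>finite B\<close> B(3) word that] .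
  qed
  then show ?thesis using B(4) by simp
qed

lemma hvec_symmetric:
  fixes f :: "'a::field_char_0 mpoly"
  assumes "homogeneous d f" "vars_in {..<N} f" "i \<le> d"
  shows "hvec N f (d - i) = hvec N f i"
  unfolding hvec_def
  using dim_derivs_dual_le[OF assms] dim_derivs_dual_le[OF assms(1,2), of "d - i"] assms(3) by simp

section \<open>Binary forms and differential operators in two variables\<close>

definition binary_form :: "nat \<Rightarrow> nat \<Rightarrow> nat \<Rightarrow> 'a::comm_ring_1 mpoly \<Rightarrow> bool" where
  "binary_form u v e q \<longleftrightarrow> homogeneous e q \<and> vars_in {u, v} q"

lemma subspace_binary_form: "MV.subspace {q :: 'a::field mpoly. binary_form u v e q}"
  using MV.subspace_inter[OF subspace_homogeneous subspace_vars_in]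
  by (simp add: binary_form_def Collect_conj_eq)

lemma binary_form_add: "binary_form u v e p \<Longrightarrow> binary_form u v e q \<Longrightarrow> binary_form u v e (p + q)"
  and binary_form_diff: "binary_form u v e p \<Longrightarrow> binary_form u v e q \<Longrightarrow> binary_form u v e (p - q)"
  and binary_form_msmult: "binary_form u v e p \<Longrightarrow> binary_form u v e (msmult c (p :: 'a::field mpoly))"
  using MV.subspace_add[OF subspace_binary_form] MV.subspace_diff[OF subspace_binary_form]
    MV.subspace_scale[OF subspace_binary_form] by auto

lemma binary_form_sum:
  "(\<And>a. a \<in> A \<Longrightarrow> binary_form u v e (h a)) \<Longrightarrow> binary_form u v e (sum h A :: 'a::field mpoly)"
  using MV.subspace_sum[OF subspace_binary_form, of A h] by simp

lemma binary_form_pdiff: "binary_form u v e q \<Longrightarrow> binary_form u v (e - 1) (pdiff j q)"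
  unfolding binary_form_def using homogeneous_pdiff vars_in_pdiff by blast

lemma binary_form_fold_pdiff: "binary_form u v e q \<Longrightarrow> binary_form u v (e - length w) (fold pdiff w q)"
  unfolding binary_form_def using homogeneous_fold_pdiff vars_in_fold_pdiff by blast

lemma binary_form_in_span_monomials:
  assumes "u \<noteq> v" "binary_form u v e (q :: 'a::field mpoly)"
  shows "q \<in> MV.span ((\<lambda>a. single (single u a + single v (e - a)) 1) ` {..e})"
proof -
  let ?M = "(\<lambda>a. single (single u a + single v (e - a)) (1::'a)) ` {..e}"
  have "single m 1 \<in> ?M" if m: "m \<in> Poly_Mapping.keys q" for m
  proof -
    have keys: "Poly_Mapping.keys m \<subseteq> {u, v}" "mon_deg m = e"
      using assms(2) m by (auto simp: binary_form_def vars_in_def homogeneous_def)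
    then have "lookup m u + lookup m v = e"
      using mon_deg_eq_sum[of "{u, v}" m] assms(1) by simp
    moreover have "m = single u (lookup m u) + single v (lookup m v)"
      using keys(1) assms(1)
      by (auto intro!: poly_mapping_eqI simp: lookup_add lookup_single when_def in_keys_iff)
    ultimately show ?thesis by (intro image_eqI[of _ _ "lookup m u"]) auto
  qed
  then have "(\<Sum>m\<in>Poly_Mapping.keys q. msmult (lookup q m) (single m 1)) \<in> MV.span ?M"
    by (intro MV.span_sum MV.span_scale MV.span_base)
  moreover have "(\<Sum>m\<in>Poly_Mapping.keys q. msmult (lookup q m) (single m 1)) = q"
    by (rule poly_mapping_eqI)
      (simp add: lookup_sum lookup_single when_def if_distrib sum.delta in_keys_iff cong: if_cong)
  ultimately show ?thesis by simp
qed

lemma binary_form_funpow_pdiff: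
  "binary_form u v e q \<Longrightarrow> binary_form u v (e - m) ((pdiff j ^^ m) (q :: 'a::field mpoly))"
  using binary_form_fold_pdiff[of u v e q "replicate m j"] by (simp add: fold_replicate)

definition diff_op1 :: "nat \<Rightarrow> nat \<Rightarrow> 'a \<Rightarrow> 'a \<Rightarrow> 'a::comm_ring_1 mpoly \<Rightarrow> 'a mpoly" where
  "diff_op1 u v a b q = msmult a (pdiff u q) + msmult b (pdiff v q)"

lemma diff_op1_0_0 [simp]: "diff_op1 u v 0 0 q = 0"
  by (simp add: diff_op1_def)

interpretation diff_op1: Vector_Spaces.linear msmult msmult "diff_op1 u v a b :: 'a::field mpoly \<Rightarrow> 'a mpoly"
  for u v a b
  by unfold_locales
    (simp_all add: diff_op1_def pdiff.add pdiff.scale MV.scale_right_distrib mult.commute)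

lemma pdiff_diff_op1: "pdiff j (diff_op1 u v a b q) = diff_op1 u v a b (pdiff j (q :: 'a::field mpoly))"
  by (simp add: diff_op1_def pdiff.add pdiff.scale pdiff_commute)

lemma binary_form_diff_op1:
  "binary_form u v (Suc e) q \<Longrightarrow> binary_form u v e (diff_op1 u v a b (q :: 'a::field mpoly))"
  unfolding diff_op1_def using binary_form_pdiff[of u v "Suc e" q]
  by (intro binary_form_add binary_form_msmult) auto

text \<open>Up to the factor \<open>e!\<close>, the coefficient of \<open>v\<^sup>e\<close> in \<open>q\<close>, or of \<open>u\<^sup>e\<close> when \<open>a = 0\<close>.\<close>
definition pivot_coeff :: "nat \<Rightarrow> nat \<Rightarrow> 'a \<Rightarrow> nat \<Rightarrow> 'a::comm_ring_1 mpoly \<Rightarrow> 'a" where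
  "pivot_coeff u v a e q = lookup ((pdiff (if a \<noteq> 0 then v else u) ^^ e) q) 0"

lemma pivot_coeff_diff:
  "pivot_coeff u v a e (msmult s p - msmult t q) = s * pivot_coeff u v a e p - t * pivot_coeff u v a e (q :: 'a::field mpoly)"
  by (simp add: pivot_coeff_def pdiffs.diff pdiffs.scale lookup_minus flip: fold_replicate)

lemma diff_op1_kernel_eq_0:
  fixes q :: "'a::field_char_0 mpoly"
  assumes "a \<noteq> 0 \<or> b \<noteq> 0"
  shows "binary_form u v e q \<Longrightarrow> diff_op1 u v a b q = 0 \<Longrightarrow> pivot_coeff u v a e q = 0 \<Longrightarrow> q = 0"
proof (induction e arbitrary: q)
  case 0
  then show ?case using homogeneous_0_eq_0[of q] by (simp add: binary_form_def pivot_coeff_def)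
next
  case (Suc e)
  let ?w = "if a \<noteq> 0 then v else u"
  have "pdiff ?w q = 0"
  proof (rule Suc.IH)
    show "binary_form u v e (pdiff ?w q)" using binary_form_pdiff[OF Suc.prems(1)] by simp
    show "diff_op1 u v a b (pdiff ?w q) = 0" using Suc.prems(2) by (simp flip: pdiff_diff_op1)
    show "pivot_coeff u v a e (pdiff ?w q) = 0"
      using Suc.prems(3) by (simp add: pivot_coeff_def funpow_Suc_right del: funpow.simps)
  qed
  then have "pdiff u q = 0 \<and> pdiff v q = 0"
    using Suc.prems(2) assms by (auto simp: diff_op1_def split: if_splits)
  then show ?case
    using homogeneous_eq_0_if_pdiffs_eq_0[of "{u, v}" q e] Suc.prems(1) by (auto simp: binary_form_def)
qed

lemma diff_op1_kernel_proportional: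
  fixes q\<^sub>1 q\<^sub>2 :: "'a::field_char_0 mpoly"
  assumes "a \<noteq> 0 \<or> b \<noteq> 0" "binary_form u v e q\<^sub>1" "binary_form u v e q\<^sub>2"
    and "diff_op1 u v a b q\<^sub>1 = 0" "diff_op1 u v a b q\<^sub>2 = 0"
  shows "msmult (pivot_coeff u v a e q\<^sub>1) q\<^sub>2 = msmult (pivot_coeff u v a e q\<^sub>2) q\<^sub>1"
proof -
  let ?r = "msmult (pivot_coeff u v a e q\<^sub>1) q\<^sub>2 - msmult (pivot_coeff u v a e q\<^sub>2) q\<^sub>1"
  have "?r = 0"
  proof (rule diff_op1_kernel_eq_0[OF assms(1)])
    show "binary_form u v e ?r"
      using assms(2,3) by (intro binary_form_diff binary_form_msmult)
    show "diff_op1 u v a b ?r = 0" using assms(4,5) by (simp add: diff_op1.diff diff_op1.scale)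
    show "pivot_coeff u v a e ?r = 0" by (simp add: pivot_coeff_diff)
  qed
  then show ?thesis by simp
qed

lemma diff_op1_kernel_dependent:
  fixes q\<^sub>1 q\<^sub>2 :: "'a::field_char_0 mpoly"
  assumes "a \<noteq> 0 \<or> b \<noteq> 0" "binary_form u v e q\<^sub>1" "binary_form u v e q\<^sub>2"
    and "diff_op1 u v a b q\<^sub>1 = 0" "diff_op1 u v a b q\<^sub>2 = 0"
  obtains s t where "s \<noteq> 0 \<or> t \<noteq> 0" "msmult s q\<^sub>1 + msmult t q\<^sub>2 = 0"
proof (cases "pivot_coeff u v a e q\<^sub>1 = 0 \<and> pivot_coeff u v a e q\<^sub>2 = 0")
  case True
  then have "q\<^sub>1 = 0" using diff_op1_kernel_eq_0[OF assms(1,2,4)] by simp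
  then show ?thesis using that[of 1 0] by simp
next
  case False
  have "msmult (pivot_coeff u v a e q\<^sub>2) q\<^sub>1 + msmult (- pivot_coeff u v a e q\<^sub>1) q\<^sub>2 = 0"
    using diff_op1_kernel_proportional[OF assms] by simp
  from that[OF _ this] False show ?thesis by auto
qed

lemma lin_indep_fam_subset:
  assumes "lin_indep_fam n p" "S \<subseteq> {..n}" "(\<Sum>l\<in>S. msmult (c l) (p l)) = 0"
  shows "\<forall>l\<in>S. c l = 0"
proof -
  define c' where "c' l = (if l \<in> S then c l else 0)" for l
  have "(\<Sum>l\<le>n. msmult (c' l) (p l)) = (\<Sum>l\<in>S. msmult (c l) (p l))"
    using assms(2) by (intro sum.mono_neutral_cong_right) (auto simp: c'_def)
  then have "\<forall>i\<le>n. c' i = 0" using assms(1,3) unfolding lin_indep_fam_def by metis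
  then show ?thesis using assms(2) by (auto simp: c'_def)
qed

lemma lin_indep_fam_three:
  assumes "lin_indep_fam n p" "i \<le> n" "j \<le> n" "k \<le> n" "i \<noteq> j" "i \<noteq> k" "j \<noteq> k"
    and "msmult r (p i) + msmult s (p j) + msmult t (p k) = 0"
  shows "r = 0 \<and> s = 0 \<and> t = 0"
  using lin_indep_fam_subset[OF assms(1), of "{i, j, k}" "\<lambda>l. if l = i then r else if l = j then s else t"] assms
  by (auto simp: add.assoc)

text \<open>Stated modulo a third form \<open>p\<^sub>k\<close>, which the proof of \<open>diff_op2_kernel_excludes_three\<close> needs.\<close>
lemma diff_op1_kernel_excludes_two:
  fixes p :: "nat \<Rightarrow> 'a::field_char_0 mpoly"
  assumes indep: "lin_indep_fam n p" and bin: "\<And>l. l \<le> n \<Longrightarrow> binary_form u v e (p l)"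
    and "a \<noteq> 0 \<or> b \<noteq> 0" and ijk: "i \<le> n" "j \<le> n" "k \<le> n" "i \<noteq> j" "i \<noteq> k" "j \<noteq> k"
    and "diff_op1 u v a b (p i - msmult \<sigma> (p k)) = 0" "diff_op1 u v a b (p j - msmult \<tau> (p k)) = 0"
  shows False
proof -
  obtain s t where st: "s \<noteq> 0 \<or> t \<noteq> 0"
    and "msmult s (p i - msmult \<sigma> (p k)) + msmult t (p j - msmult \<tau> (p k)) = 0"
  proof (rule diff_op1_kernel_dependent[OF \<open>a \<noteq> 0 \<or> b \<noteq> 0\<close> _ _ assms(10,11)])
    show "binary_form u v e (p i - msmult \<sigma> (p k))" "binary_form u v e (p j - msmult \<tau> (p k))"
      using bin ijk by (auto intro: binary_form_diff binary_form_msmult)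
  qed
  then have "msmult s (p i) + msmult t (p j) + msmult (- (s * \<sigma> + t * \<tau>)) (p k) = 0"
    by (simp add: MV.scale_right_diff_distrib MV.scale_left_distrib algebra_simps)
  then show False using lin_indep_fam_three[OF indep ijk] st by blast
qed

lemma binary_quadratic_factors:
  fixes a b c :: "'a::alg_closed_field"
  assumes "a \<noteq> 0 \<or> b \<noteq> 0 \<or> c \<noteq> 0"
  obtains \<alpha> \<beta> \<gamma> \<delta> where "\<alpha> \<noteq> 0 \<or> \<beta> \<noteq> 0" "\<gamma> \<noteq> 0 \<or> \<delta> \<noteq> 0"
    "\<alpha> * \<gamma> = a" "\<alpha> * \<delta> + \<beta> * \<gamma> = b" "\<beta> * \<delta> = c"
proof (cases "a = 0")
  case True
  then show ?thesis using assms that[of 0 1 b c] by auto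
next
  case False
  then obtain x where "poly [:c, - b, a:] x = 0"
    using alg_closed_imp_poly_has_root[of "[:c, - b, a:]"] by auto
  then have "(b - a * x) * x = c" by (simp add: algebra_simps)
  then show ?thesis using False that[of a "b - a * x" 1 x] by auto
qed

definition diff_op2 :: "nat \<Rightarrow> nat \<Rightarrow> 'a \<Rightarrow> 'a \<Rightarrow> 'a \<Rightarrow> 'a::comm_ring_1 mpoly \<Rightarrow> 'a mpoly" where
  "diff_op2 u v a b c q =
     msmult a (pdiff u (pdiff u q)) + msmult b (pdiff u (pdiff v q)) + msmult c (pdiff v (pdiff v q))"

lemma diff_op2_0_0_0 [simp]: "diff_op2 u v 0 0 0 q = 0"
  by (simp add: diff_op2_def)

lemma diff_op1_diff_op1:
  "diff_op1 u v \<alpha> \<beta> (diff_op1 u v \<gamma> \<delta> q) = diff_op2 u v (\<alpha> * \<gamma>) (\<alpha> * \<delta> + \<beta> * \<gamma>) (\<beta> * \<delta>) (q :: 'a::field mpoly)"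
  by (simp add: diff_op1_def diff_op2_def pdiff.add pdiff.scale pdiff_commute[of v u]
      MV.scale_right_distrib MV.scale_left_distrib algebra_simps)

lemma diff_op2_kernel_excludes_three:
  fixes p :: "nat \<Rightarrow> 'a::{alg_closed_field, field_char_0} mpoly"
  assumes indep: "lin_indep_fam n p" and "2 \<le> n"
    and bin: "\<And>i. i \<le> n \<Longrightarrow> binary_form u v (Suc e) (p i)" and "a \<noteq> 0 \<or> b \<noteq> 0 \<or> c \<noteq> 0"
    and kernel: "\<And>i. i \<le> n \<Longrightarrow> diff_op2 u v a b c (p i) = 0"
  shows False
proof -
  obtain \<alpha> \<beta> \<gamma> \<delta> where \<alpha>\<beta>: "\<alpha> \<noteq> 0 \<or> \<beta> \<noteq> 0" and \<gamma>\<delta>: "\<gamma> \<noteq> 0 \<or> \<delta> \<noteq> 0"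
    and factors: "\<alpha> * \<gamma> = a" "\<alpha> * \<delta> + \<beta> * \<gamma> = b" "\<beta> * \<delta> = c"
    using binary_quadratic_factors[OF \<open>a \<noteq> 0 \<or> b \<noteq> 0 \<or> c \<noteq> 0\<close>] by blast
  define y where "y i = diff_op1 u v \<gamma> \<delta> (p i)" for i
  define r where "r i = pivot_coeff u v \<alpha> e (y i)" for i
  have y_bin: "binary_form u v e (y i)" if "i \<le> n" for i
    using binary_form_diff_op1[OF bin[OF that]] by (simp add: y_def)
  have y_kernel: "diff_op1 u v \<alpha> \<beta> (y i) = 0" if "i \<le> n" for i
    using kernel[OF that] factors by (simp add: y_def diff_op1_diff_op1)
  have reduced: "diff_op1 u v \<gamma> \<delta> (p i - msmult (r i / r k) (p k)) = 0"
    if "i \<le> n" "k \<le> n" "r k \<noteq> 0" for i k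
  proof -
    have "msmult (r k) (y i) = msmult (r i) (y k)"
      using diff_op1_kernel_proportional[OF \<alpha>\<beta> y_bin[OF that(2)] y_bin[OF that(1)]
          y_kernel[OF that(2)] y_kernel[OF that(1)]] by (simp add: r_def)
    then have "msmult (1 / r k) (msmult (r k) (y i)) = msmult (1 / r k) (msmult (r i) (y k))"
      by simp
    then have "y i = msmult (r i / r k) (y k)" using \<open>r k \<noteq> 0\<close> by simp
    then show ?thesis by (simp add: y_def diff_op1.diff diff_op1.scale)
  qed
  consider "r 0 = 0" "r 1 = 0" | "r 0 \<noteq> 0" | "r 1 \<noteq> 0" by blast
  then show False
  proof cases
    case 1
    then have "y 0 = 0" "y 1 = 0"
      using diff_op1_kernel_eq_0[OF \<alpha>\<beta> y_bin y_kernel] \<open>2 \<le> n\<close> by (simp_all add: r_def)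
    then show False
      using diff_op1_kernel_excludes_two[OF indep bin \<gamma>\<delta>, of 0 1 2 0 0] \<open>2 \<le> n\<close> by (simp add: y_def)
  next
    case 2
    then show False
      using diff_op1_kernel_excludes_two[OF indep bin \<gamma>\<delta>, of 1 2 0] reduced[of 1 0] reduced[of 2 0] \<open>2 \<le> n\<close>
      by simp
  next
    case 3
    then show False
      using diff_op1_kernel_excludes_two[OF indep bin \<gamma>\<delta>, of 0 2 1] reduced[of 0 1] reduced[of 2 1] \<open>2 \<le> n\<close>
      by simp
  qed
qed

lemma diff_op1_kernel_pdiff_ne_0:
  fixes q :: "'a::field_char_0 mpoly"
  assumes "binary_form u v (Suc e) q" "q \<noteq> 0" "diff_op1 u v 1 t q = 0"
  shows "pdiff v q \<noteq> 0"
proof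
  assume "pdiff v q = 0"
  moreover from this have "pdiff u q = 0" using assms(3) by (simp add: diff_op1_def)
  ultimately show False
    using homogeneous_eq_0_if_pdiffs_eq_0[of "{u, v}" q e] assms(1,2) by (auto simp: binary_form_def)
qed

text \<open>The kernel of \<open>\<partial>\<^sub>u + t \<partial>\<^sub>v\<close> on binary forms of degree \<open>e\<close> is spanned by \<open>(t u - v)\<^sup>e\<close>, so this
  is the independence of at most \<open>e + 1\<close> such powers.\<close>

lemma diff_op1_kernels_independent:
  fixes q :: "'a::field_char_0 \<Rightarrow> 'a mpoly"
  assumes "finite T" "card T \<le> Suc e"
    and "\<And>t. t \<in> T \<Longrightarrow> binary_form u v e (q t) \<and> q t \<noteq> 0 \<and> diff_op1 u v 1 t (q t) = 0"
    and "(\<Sum>t\<in>T. msmult (c t) (q t)) = 0"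
  shows "\<forall>t\<in>T. c t = 0"
  using assms
proof (induction T arbitrary: e q c rule: finite_induct)
  case (insert s T)
  show ?case
  proof (cases "T = {}")
    case True
    then show ?thesis using insert.prems by simp
  next
    case False
    then obtain e' where e': "e = Suc e'"
      using insert.prems(1) insert.hyps by (cases e) auto
    have shift: "diff_op1 u v 1 s (q t) = msmult (s - t) (pdiff v (q t))" if "t \<in> T" for t
      using insert.prems(2) that by (simp add: diff_op1_def algebra_simps MV.scale_left_diff_distrib)
    have "0 = diff_op1 u v 1 s (\<Sum>t\<in>insert s T. msmult (c t) (q t))"
      using insert.prems(3) by simp
    also have "\<dots> = (\<Sum>t\<in>T. msmult (c t) (diff_op1 u v 1 s (q t)))"
      using insert.prems(2)[of s] insert.hyps by (simp add: diff_op1.add diff_op1.sum diff_op1.scale)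
    also have "\<dots> = (\<Sum>t\<in>T. msmult (c t * (s - t)) (pdiff v (q t)))"
      by (rule sum.cong) (simp_all add: shift)
    finally have "(\<Sum>t\<in>T. msmult (c t * (s - t)) (pdiff v (q t))) = 0" ..
    then have "\<forall>t\<in>T. c t * (s - t) = 0"
    proof (intro insert.IH[of e'])
      show "card T \<le> Suc e'" using insert.prems(1) insert.hyps e' by simp
      show "binary_form u v e' (pdiff v (q t)) \<and> pdiff v (q t) \<noteq> 0 \<and> diff_op1 u v 1 t (pdiff v (q t)) = 0"
        if "t \<in> T" for t
        using insert.prems(2)[of t] that e' binary_form_pdiff[of u v e "q t" v]
          diff_op1_kernel_pdiff_ne_0[of u v e' "q t" t]
        by (auto simp flip: pdiff_diff_op1)
    qed
    then have "\<forall>t\<in>T. c t = 0" using insert.hyps(2) by auto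
    moreover from this have "msmult (c s) (q s) = 0" using insert.prems(3) insert.hyps by simp
    ultimately show ?thesis using insert.prems(2) by auto
  qed
qed simp

lemma exists_diff_op1_inj_on_span:
  fixes p :: "nat \<Rightarrow> 'a::field_char_0 mpoly"
  assumes indep: "lin_indep_fam n p" and bin: "\<And>i. i \<le> n \<Longrightarrow> binary_form u v e (p i)" and "n + 1 \<le> e"
  obtains t where "\<And>c. diff_op1 u v 1 t (\<Sum>i\<le>n. msmult (c i) (p i)) = 0 \<Longrightarrow> \<forall>i\<le>n. c i = 0"
proof (rule ccontr)
  assume "\<not> thesis"
  then have "\<forall>t. \<exists>c. diff_op1 u v 1 t (\<Sum>i\<le>n. msmult (c i) (p i)) = 0 \<and> \<not> (\<forall>i\<le>n. c i = 0)"
    using that by blast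
  then obtain C where C: "\<And>t. diff_op1 u v 1 t (\<Sum>i\<le>n. msmult (C t i) (p i)) = 0" "\<And>t. \<not> (\<forall>i\<le>n. C t i = 0)"
    by metis
  define q where "q t = (\<Sum>i\<le>n. msmult (C t i) (p i))" for t
  define T where "T = (of_nat ` {..e} :: 'a set)"
  have "finite T" and card_T: "card T = Suc e"
    unfolding T_def by (auto simp: card_image inj_on_def)
  have "q t \<noteq> 0" for t using C(2)[of t] indep unfolding q_def lin_indep_fam_def by blast
  moreover have "binary_form u v e (q t)" for t
    unfolding q_def using bin by (intro binary_form_sum binary_form_msmult) auto
  ultimately have "MV.independent (q ` T)" "card (q ` T) = card T"
    using MV.independent_family[OF \<open>finite T\<close>, of q] diff_op1_kernels_independent[OF \<open>finite T\<close>, of e u v q]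
      card_T C(1) by (auto simp: q_def)
  moreover have "q ` T \<subseteq> MV.span (p ` {..n})"
    unfolding q_def by (auto intro!: MV.span_sum MV.span_scale intro: MV.span_base)
  ultimately have "Suc e \<le> card (p ` {..n})"
    using MV.independent_span_bound[of "p ` {..n}" "q ` T"] card_T by auto
  also have "\<dots> \<le> Suc n" using card_image_le[of "{..n}" p] by simp
  finally show False using \<open>n + 1 \<le> e\<close> by simp
qed

section \<open>Perazzo forms\<close>

lemma sum_lessThan_add_3:
  "(\<Sum>j<n + 3. F j) = (\<Sum>j\<le>n. F j) + F (n + 1) + (F (n + 2) :: 'b::comm_monoid_add)" for n :: nat
  by (simp add: numeral_3_eq_3 lessThan_Suc_atMost[symmetric] add.assoc)

lemma sum_atMost_add_3:
  "(\<Sum>j\<le>n + 3. F j) = (\<Sum>j\<le>n. F j) + F (n + 1) + F (n + 2) + (F (n + 3) :: 'b::comm_monoid_add)" for n :: nat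
  by (simp add: numeral_3_eq_3 add.assoc)

locale perazzo =
  fixes n d :: nat and p :: "nat \<Rightarrow> 'a::{alg_closed_field, field_char_0} mpoly" and g f :: "'a mpoly"
  assumes n: "2 \<le> n" and d: "n + 2 \<le> d"
    and p_binary: "\<And>i. i \<le> n \<Longrightarrow> binary_form (n + 1) (n + 2) (d - 1) (p i)"
    and p_indep: "lin_indep_fam n p"
    and g_binary: "binary_form (n + 1) (n + 2) d g"
    and f_eq: "f = (\<Sum>i\<le>n. mvar i * p i) + g"
begin

lemma f_homogeneous: "homogeneous d f"
proof -
  have "homogeneous d (mvar i * p i)" if "i \<le> n" for i
    using homogeneous_mvar_mult[of "d - 1" "p i" i] p_binary[OF that] d by (simp add: binary_form_def)
  then show ?thesis
    unfolding f_eq using g_binary by (auto simp: binary_form_def intro!: homogeneous_add homogeneous_sum)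
qed

lemma f_vars_in: "vars_in {..<n + 3} f"
proof -
  have "vars_in {..<n + 3} (mvar i * p i)" if "i \<le> n" for i
    using p_binary[OF that] that by (intro vars_in_mvar_mult) (auto simp: binary_form_def elim: vars_in_mono)
  moreover have "vars_in {..<n + 3} g" using g_binary by (auto simp: binary_form_def elim: vars_in_mono)
  ultimately show ?thesis
    unfolding f_eq by (auto intro!: vars_in_add vars_in_sum)
qed

lemma pdiff_x_binary_form: "k \<le> n \<Longrightarrow> binary_form (n + 1) (n + 2) e q \<Longrightarrow> pdiff k q = 0"
  unfolding binary_form_def by (intro pdiff_eq_0_if_not_vars_in[of "{n + 1, n + 2}"]) auto

lemma pdiff_x_f: "k \<le> n \<Longrightarrow> pdiff k f = p k"
proof -
  assume k: "k \<le> n"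
  have "pdiff k f = (\<Sum>i\<le>n. pdiff k (mvar i * p i)) + pdiff k g"
    by (simp add: f_eq pdiff.add pdiff.sum)
  also have "\<dots> = (\<Sum>i\<le>n. if i = k then p i else 0)"
    using pdiff_x_binary_form[OF k g_binary] pdiff_x_binary_form[OF k p_binary] by (simp add: pdiff_mvar_mult)
  also have "\<dots> = p k" using k by simp
  finally show ?thesis .
qed

lemma pdiff_x_diff_op1_f: "k \<le> n \<Longrightarrow> pdiff k (diff_op1 u v a b f) = diff_op1 u v a b (p k)"
  by (simp add: pdiff_diff_op1 pdiff_x_f)

lemma pdiff_x_diff_op2_f: "k \<le> n \<Longrightarrow> pdiff k (diff_op2 u v a b c f) = diff_op2 u v a b c (p k)"
  by (simp add: diff_op2_def pdiff.add pdiff.scale pdiff_commute[of k] pdiff_x_f)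

lemma pdiff_x_lin_comb_p: "k \<le> n \<Longrightarrow> pdiff k (\<Sum>i\<le>n. msmult (c i) (p i)) = 0"
  using pdiff_x_binary_form[OF _ p_binary] by (simp add: pdiff.sum pdiff.scale)

lemma diff_op1_kills_all_p_imp_0:
  assumes "\<And>k. k \<le> n \<Longrightarrow> diff_op1 (n + 1) (n + 2) a b (p k) = 0"
  shows "a = 0 \<and> b = 0"
proof (rule ccontr)
  assume "\<not> (a = 0 \<and> b = 0)"
  then have "a \<noteq> 0 \<or> b \<noteq> 0" by simp
  then show False
    using diff_op1_kernel_excludes_two[OF p_indep p_binary, of a b 0 1 2 0 0] assms n by simp
qed

lemma diff_op2_kills_all_p_imp_0:
  assumes "\<And>k. k \<le> n \<Longrightarrow> diff_op2 (n + 1) (n + 2) a b c (p k) = 0"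
  shows "a = 0 \<and> b = 0 \<and> c = 0"
proof (rule ccontr)
  assume "\<not> (a = 0 \<and> b = 0 \<and> c = 0)"
  then have "a \<noteq> 0 \<or> b \<noteq> 0 \<or> c \<noteq> 0" by simp
  moreover have "binary_form (n + 1) (n + 2) (Suc (d - 2)) (p i)" if "i \<le> n" for i
    using p_binary[OF that] d by (simp add: Suc_diff_Suc numeral_2_eq_2)
  ultimately show False using diff_op2_kernel_excludes_three[OF p_indep n _ _ assms] by blast
qed

lemma dim_derivs_1: "MV.dim (derivs (n + 3) 1 f) = n + 3"
proof -
  have "\<forall>j\<in>{..<n + 3}. c j = 0" if rel: "(\<Sum>j\<in>{..<n + 3}. msmult (c j) (pdiff j f)) = 0" for c
  proof -
    have rel': "(\<Sum>j\<le>n. msmult (c j) (p j)) + diff_op1 (n + 1) (n + 2) (c (n + 1)) (c (n + 2)) f = 0"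
      using rel by (simp add: sum_lessThan_add_3 pdiff_x_f diff_op1_def add.assoc)
    have "diff_op1 (n + 1) (n + 2) (c (n + 1)) (c (n + 2)) (p k) = 0" if "k \<le> n" for k
      using arg_cong[OF rel', of "pdiff k"] that by (simp add: pdiff.add pdiff_x_lin_comb_p pdiff_x_diff_op1_f)
    then have "c (n + 1) = 0 \<and> c (n + 2) = 0" by (rule diff_op1_kills_all_p_imp_0)
    then have "\<forall>j\<le>n. c j = 0" using rel' p_indep unfolding lin_indep_fam_def by simp
    with \<open>c (n + 1) = 0 \<and> c (n + 2) = 0\<close> show ?thesis by (auto simp: less_Suc_eq numeral_3_eq_3)
  qed
  then have "MV.independent ((\<lambda>j. pdiff j f) ` {..<n + 3})" "card ((\<lambda>j. pdiff j f) ` {..<n + 3}) = n + 3"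
    using MV.independent_family[of "{..<n + 3}" "\<lambda>j. pdiff j f"] by auto
  moreover have "derivs (n + 3) 1 f = (\<lambda>j. pdiff j f) ` {..<n + 3}" by auto
  ultimately show ?thesis by (simp add: MV.dim_eq_card_independent)
qed

lemma dim_derivs_2: "n + 4 \<le> MV.dim (derivs (n + 3) 2 f)"
proof -
  let ?u = "n + 1" and ?v = "n + 2"
  have "n + 1 \<le> d - 1" using d by simp
  then obtain t where t: "\<And>c. diff_op1 ?u ?v 1 t (\<Sum>i\<le>n. msmult (c i) (p i)) = 0 \<Longrightarrow> \<forall>i\<le>n. c i = 0"
    using exists_diff_op1_inj_on_span[OF p_indep p_binary] by blast
  define G where "G i = (if i \<le> n then diff_op1 ?u ?v 1 t (p i)
      else if i = n + 1 then pdiff ?u (pdiff ?u f)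
      else if i = n + 2 then pdiff ?u (pdiff ?v f) else pdiff ?v (pdiff ?v f))" for i
  have "\<forall>i\<in>{..n + 3}. c i = 0" if rel: "(\<Sum>i\<in>{..n + 3}. msmult (c i) (G i)) = 0" for c
  proof -
    have rel': "diff_op1 ?u ?v 1 t (\<Sum>i\<le>n. msmult (c i) (p i)) + diff_op2 ?u ?v (c (n + 1)) (c (n + 2)) (c (n + 3)) f = 0"
      using rel by (simp add: sum_atMost_add_3 G_def diff_op1.sum diff_op1.scale diff_op2_def add.assoc)
    have "diff_op2 ?u ?v (c (n + 1)) (c (n + 2)) (c (n + 3)) (p k) = 0" if "k \<le> n" for k
      using arg_cong[OF rel', of "pdiff k"] that
      by (simp add: pdiff.add pdiff_diff_op1 pdiff_x_lin_comb_p pdiff_x_diff_op2_f)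
    then have abc: "c (n + 1) = 0 \<and> c (n + 2) = 0 \<and> c (n + 3) = 0" by (rule diff_op2_kills_all_p_imp_0)
    then have "\<forall>i\<le>n. c i = 0" using t rel' by simp
    then show ?thesis using abc by (auto simp: le_Suc_eq numeral_3_eq_3)
  qed
  then have "MV.independent (G ` {..n + 3})" "card (G ` {..n + 3}) = n + 4"
    using MV.independent_family[of "{..n + 3}" G] by auto
  moreover have "G ` {..n + 3} \<subseteq> MV.span (derivs (n + 3) 2 f)"
  proof -
    have D: "pdiff j (pdiff k f) \<in> MV.span (derivs (n + 3) 2 f)" if "j < n + 3" "k < n + 3" for j k
      using pdiff_pdiff_in_derivs_2[OF that] by (rule MV.span_base)
    have "diff_op1 ?u ?v 1 t (p i) \<in> MV.span (derivs (n + 3) 2 f)" if "i \<le> n" for i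
      using that D[of ?u i] D[of ?v i]
      by (auto simp: diff_op1_def pdiff_x_f[symmetric] intro!: MV.span_add MV.span_scale)
    then show ?thesis using D by (auto simp: G_def)
  qed
  ultimately show ?thesis
    using MV.card_le_dim_if_independent_in_span[OF finite_derivs] by metis
qed

lemma derivs_cases:
  assumes "x \<in> derivs (n + 3) i f"
  shows "binary_form (n + 1) (n + 2) (d - i) x \<or>
    (\<exists>a\<le>i. x = (pdiff (n + 1) ^^ a) ((pdiff (n + 2) ^^ (i - a)) f))"
  using assms
proof (induction i arbitrary: x)
  case 0
  then show ?case by (intro disjI2 exI[of _ 0]) simp
next
  case (Suc i)
  let ?u = "n + 1" and ?v = "n + 2"
  from Suc.prems obtain j y where x: "x = pdiff j y" and "j < n + 3" and y: "y \<in> derivs (n + 3) i f"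
    by (rule derivs_SucE)
  from Suc.IH[OF y] show ?case
  proof
    assume "binary_form ?u ?v (d - i) y"
    then show ?thesis using binary_form_pdiff[of ?u ?v "d - i" y j] x by simp
  next
    assume "\<exists>a\<le>i. y = (pdiff ?u ^^ a) ((pdiff ?v ^^ (i - a)) f)"
    then obtain a where "a \<le> i" and y: "y = (pdiff ?u ^^ a) ((pdiff ?v ^^ (i - a)) f)" by blast
    consider "j \<le> n" | "j = ?u" | "j = ?v" using \<open>j < n + 3\<close> by (auto simp: less_Suc_eq numeral_3_eq_3)
    then show ?thesis
    proof cases
      case 1
      have "x = (pdiff ?u ^^ a) ((pdiff ?v ^^ (i - a)) (p j))"
        using x y 1 by (simp add: pdiff_funpow_pdiff pdiff_x_f)
      moreover have "binary_form ?u ?v (d - 1 - (i - a) - a) \<dots>"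
        using p_binary[OF 1] by (intro binary_form_funpow_pdiff)
      ultimately show ?thesis using \<open>a \<le> i\<close> by simp
    next
      case 2
      then have "x = (pdiff ?u ^^ Suc a) ((pdiff ?v ^^ (Suc i - Suc a)) f)" using x y by simp
      then show ?thesis using \<open>a \<le> i\<close> by (intro disjI2 exI[of _ "Suc a"]) simp
    next
      case 3
      then have "x = (pdiff ?u ^^ a) ((pdiff ?v ^^ (Suc i - a)) f)"
        using x y \<open>a \<le> i\<close> by (simp add: pdiff_funpow_pdiff Suc_diff_le)
      then show ?thesis using \<open>a \<le> i\<close> by (intro disjI2 exI[of _ a]) simp
    qed
  qed
qed

lemma dim_derivs_le: "MV.dim (derivs (n + 3) i f) \<le> d + 2"
proof (cases "i \<le> d")
  case True
  define M where "M = (\<lambda>a. single (single (n + 1) a + single (n + 2) (d - i - a)) (1::'a)) ` {..d - i}"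
  define F where "F = (\<lambda>a. (pdiff (n + 1) ^^ a) ((pdiff (n + 2) ^^ (i - a)) f)) ` {..i}"
  have "derivs (n + 3) i f \<subseteq> MV.span (M \<union> F)"
  proof
    fix x assume "x \<in> derivs (n + 3) i f"
    then consider "binary_form (n + 1) (n + 2) (d - i) x" | "x \<in> F"
      using derivs_cases unfolding F_def by blast
    then show "x \<in> MV.span (M \<union> F)"
    proof cases
      case 1
      then have "x \<in> MV.span M" unfolding M_def by (intro binary_form_in_span_monomials) auto
      then show ?thesis using MV.span_mono[of M "M \<union> F"] by blast
    qed (auto intro: MV.span_base)
  qed
  then have "MV.dim (derivs (n + 3) i f) \<le> card (M \<union> F)"
    by (rule MV.dim_le_card) (simp add: M_def F_def)
  also have "\<dots> \<le> card M + card F" by (rule card_Un_le)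
  also have "\<dots> \<le> Suc (d - i) + Suc i"
    unfolding M_def F_def by (intro add_mono card_image_le[THEN order_trans]) auto
  finally show ?thesis using True by simp
next
  case False
  then have "derivs (n + 3) i f \<subseteq> MV.span {0}"
    using fold_pdiff_eq_0[OF f_homogeneous] by (auto simp: derivs_eq intro: MV.span_zero)
  then have "MV.dim (derivs (n + 3) i f) \<le> card {0 :: 'a mpoly}"
    by (rule MV.dim_le_card) simp
  then show ?thesis by simp
qed

end

theorem lemma3p3:
  fixes f :: "'a::{alg_closed_field, field_char_0} mpoly"
    and n d :: nat
  assumes "n \<ge> 2" and "d \<ge> n + 2"
    and "perazzo_form n d f"
  shows "(hvec (n+3) f 1 = n + 3 \<and> hvec (n+3) f (d - 1) = n + 3)
       \<and> (hvec (n+3) f 2 = hvec (n+3) f (d - 2) \<and> hvec (n+3) f 2 \<ge> n + 4)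
       \<and> (\<forall>i. hvec (n+3) f i \<le> d + 2)"
proof -
  obtain p g where "\<forall>i\<le>n. homogeneous (d - 1) (p i) \<and> vars_in {n + 1, n + 2} (p i)"
    "lin_indep_fam n p" "homogeneous d g" "vars_in {n + 1, n + 2} g" "f = (\<Sum>i\<le>n. mvar i * p i) + g"
    using assms(3) unfolding perazzo_form_def by blast
  then interpret perazzo n d p g f
    using assms(1,2) by unfold_locales (simp_all add: binary_form_def)
  have "hvec (n + 3) f (d - i) = hvec (n + 3) f i" if "i \<le> d" for i
    using hvec_symmetric[OF f_homogeneous f_vars_in that] .
  then show ?thesis
    using dim_derivs_1 dim_derivs_2 dim_derivs_le assms(2) unfolding hvec_def by auto
qed

end
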